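(* Let $\mathsf{SUPERINV}$ be the verification condition provider given by $\mathsf{SUPERINV}(\mathtt{while}(\varphi)\{C_{\mathrm{body}}\}[I],f)=\mathsf{true}$ iff $[\varphi]\cdot\mathrm{dwp}^*[\![C_{\mathrm{body}}]\!](I)+[\neg\varphi]\cdot f\le I$. Then $\mathsf{SUPERINV}$ yields upper bounds for $\mathrm{dwp}$, and $\mathrm{trans}^{\preceq}_{\mathrm{dwp}}$ preserves $\mathsf{SUPERINV}$.
   Context: States: fix a countably infinite set of program variables with values in $\mathbb{Q}_{\ge 0}$; a state is a map $\sigma$ from variables to $\mathbb{Q}_{\ge0}$ which is $0$ for all but finitely many variables; $\mathsf{States}$ is the set of states. A predicate is a map $\varphi:\mathsf{States}\to\{\mathsf{true},\mathsf{false}\}$; $\varphi\models\psi$ means every state satisfying $\varphi$ satisfies $\psi$; $\models\varphi$ means $\varphi$ holds in every state; $\varphi\Rightarrow\psi$ is the usual implication. Expectations: $\mathbb{E}$ is the set of maps $\mathsf{States}\to[0,\infty]$, ordered pointwise; $+,\cdot$ pointwise with $0\cdot\infty=0$; $\sqcap$ pointwise min; $[\varphi]$ Iverson bracket; $(\varphi\to g)(\sigma)=g(\sigma)$ if $\sigma\models\varphi$, else $\infty$; $f[x/E](\sigma)=f(\sigma[x\mapsto E(\sigma)])$. Programs of $\mathsf{pGCL}$: $C ::= \mathtt{skip} \mid x:=E \mid C;C \mid \mathtt{if}\ \varphi_1\to C\ \square\ \varphi_2\to C \mid \{C\}[p]\{C\} \mid \mathtt{while}(\varphi)\{C\}[I]$,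 where $E:\mathsf{States}\to\mathbb{Q}_{\ge0}$, $p:\mathsf{States}\to[0,1]$, in every guarded choice $\varphi_1\vee\varphi_2$ is valid, and every loop carries an invariant annotation $I\in\mathbb{E}$. Demonic weakest preexpectation: $\mathrm{dwp}[\![\mathtt{skip}]\!](f)=f$; $\mathrm{dwp}[\![x:=E]\!](f)=f[x/E]$; $\mathrm{dwp}[\![C_1;C_2]\!](f)=\mathrm{dwp}[\![C_1]\!](\mathrm{dwp}[\![C_2]\!](f))$; $\mathrm{dwp}[\![\mathtt{if}\ \varphi_1\to C_1\ \square\ \varphi_2\to C_2]\!](f)=(\varphi_1\to\mathrm{dwp}[\![C_1]\!](f))\sqcap(\varphi_2\to\mathrm{dwp}[\![C_2]\!](f))$; $\mathrm{dwp}[\![\{C_1\}[p]\{C_2\}]\!](f)=p\cdot\mathrm{dwp}[\![C_1]\!](f)+(1-p)\cdot\mathrm{dwp}[\![C_2]\!](f)$; loops: least fixpoint of $g\mapsto[\neg\varphi]\cdot f+[\varphi]\cdot\mathrm{dwp}[\![C']\!](g)$. The auxiliary $\mathrm{dwp}^*$ follows the same rules except $\mathrm{dwp}^*[\![\mathtt{while}(\varphi)\{C'\}[I]]\!](f)=I$. Implementation relation $\multimap$: smallest partial order on $\mathsf{pGCL}$ closed under: if $C_1'\multimap C_1$, $C_2'\multimap C_2$ then $C_1';C_2'\multimap C_1;C_2$ and $\{C_1'\}[p]\{C_2'\}\multimap\{C_1\}[p]\{C_2\}$; if moreover $\varphi_1'\models\varphi_1$, $\varphi_2'\models\varphi_2$,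 $\models\varphi_1'\vee\varphi_2'$ then $\mathtt{if}\ \varphi_1'\to C_1'\ \square\ \varphi_2'\to C_2'\multimap\mathtt{if}\ \varphi_1\to C_1\ \square\ \varphi_2\to C_2$; if $C'\multimap C$ then $\mathtt{while}(\varphi)\{C'\}\multimap\mathtt{while}(\varphi)\{C\}$. Verification conditions: a provider $\mathfrak{C}$ maps annotated loops and $f\in\mathbb{E}$ to truth values; $\mathrm{vc}^{\mathfrak{C},\mathrm{dwp}}[\![C]\!](f)$: $\mathsf{true}$ for $\mathtt{skip}$ and assignments; $\mathrm{vc}[\![C_1]\!](\mathrm{dwp}^*[\![C_2]\!](f))\wedge\mathrm{vc}[\![C_2]\!](f)$ for $C_1;C_2$; $\mathrm{vc}[\![C_1]\!](f)\wedge\mathrm{vc}[\![C_2]\!](f)$ for guarded and probabilistic choices; $\mathfrak{C}(\mathtt{while}(\varphi)\{C'\}[I],f)\wedge\mathrm{vc}[\![C']\!](I)$ for loops. $\mathfrak{C}$ yields upper bounds for $\mathrm{dwp}$ if for all $C\in\mathsf{pGCL}$, $f\in\mathbb{E}$, $\mathrm{vc}^{\mathfrak{C},\mathrm{dwp}}[\![C]\!](f)$ implies $\mathrm{dwp}[\![C]\!](f)\le\mathrm{dwp}^*[\![C]\!](f)$. Transformer $\mathrm{trans}^{\preceq}_{\mathrm{dwp}}$ (with $f\preceq g$ the predicate true at $\sigma$ iff $f(\sigma)\le g(\sigma)$): $\mathtt{skip}$, assignments unchanged; $C_1;C_2\mapsto \mathrm{trans}[\![C_1]\!](\mathrm{dwp}^*[\![C_2]\!](f));\mathrm{trans}[\![C_2]\!](f)$;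 $\mathtt{if}\ \varphi_1\to C_1\ \square\ \varphi_2\to C_2\mapsto\mathtt{if}\ \psi_1\to\mathrm{trans}[\![C_1]\!](f)\ \square\ \psi_2\to\mathrm{trans}[\![C_2]\!](f)$ with $\psi_1=\varphi_1\wedge(\varphi_2\Rightarrow\mathrm{dwp}^*[\![C_1]\!](f)\preceq\mathrm{dwp}^*[\![C_2]\!](f))$, $\psi_2=\varphi_2\wedge(\varphi_1\Rightarrow\mathrm{dwp}^*[\![C_2]\!](f)\preceq\mathrm{dwp}^*[\![C_1]\!](f))$; probabilistic choice transformed branchwise; $\mathtt{while}(\varphi)\{C'\}[I]\mapsto\mathtt{while}(\varphi)\{\mathrm{trans}[\![C']\!](I)\}[I]$. $\mathrm{trans}^{\preceq}_{\mathrm{dwp}}$ preserves $\mathfrak{C}$ if for all $C,C'$, $f$: $\mathrm{vc}^{\mathfrak{C},\mathrm{dwp}}[\![C]\!](f)$ and $C'\multimap\mathrm{trans}^{\preceq}_{\mathrm{dwp}}[\![C]\!](f)$ imply $\mathrm{vc}^{\mathfrak{C},\mathrm{dwp}}[\![C']\!](f)$. *)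

theory Defs
  imports Complex_Main "HOL-Library.Extended_Nonnegative_Real"
begin

typedef state = "{\<sigma> :: nat \<Rightarrow> rat. (\<forall>x. 0 \<le> \<sigma> x) \<and> finite {x. \<sigma> x \<noteq> 0}}"
  by (rule exI[of _ "\<lambda>_. 0"]) simp

type_synonym pred = "state \<Rightarrow> bool"
type_synonym expect = "state \<Rightarrow> ennreal"

text \<open>State update sigma[x := q]. (Only used with q \<ge> 0, guaranteed by well-formedness.)\<close>
definition upd :: "state \<Rightarrow> nat \<Rightarrow> rat \<Rightarrow> state" where
  "upd \<sigma> x q = Abs_state ((Rep_state \<sigma>)(x := q))"

datatype pgcl =
    Skip
  | Assign nat "state \<Rightarrow> rat"
  | Seq pgcl pgcl
  | GIf pred pgcl pred pgcl
  | Prob pgcl "state \<Rightarrow> real" pgcl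
  | While pred pgcl expect

fun wf :: "pgcl \<Rightarrow> bool" where
  "wf Skip = True"
| "wf (Assign x E) = (\<forall>\<sigma>. 0 \<le> E \<sigma>)"
| "wf (Seq C1 C2) = (wf C1 \<and> wf C2)"
| "wf (GIf \<phi>1 C1 \<phi>2 C2) = ((\<forall>\<sigma>. \<phi>1 \<sigma> \<or> \<phi>2 \<sigma>) \<and> wf C1 \<and> wf C2)"
| "wf (Prob C1 p C2) = ((\<forall>\<sigma>. 0 \<le> p \<sigma> \<and> p \<sigma> \<le> 1) \<and> wf C1 \<and> wf C2)"
| "wf (While \<phi> C I) = wf C"

definition iv :: "pred \<Rightarrow> expect" where
  "iv \<phi> \<sigma> = (if \<phi> \<sigma> then 1 else 0)"

definition guardto :: "pred \<Rightarrow> expect \<Rightarrow> expect" where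
  "guardto \<phi> g \<sigma> = (if \<phi> \<sigma> then g \<sigma> else \<infinity>)"

definition subst :: "expect \<Rightarrow> nat \<Rightarrow> (state \<Rightarrow> rat) \<Rightarrow> expect" where
  "subst f x E \<sigma> = f (upd \<sigma> x (E \<sigma>))"

definition pmix :: "(state \<Rightarrow> real) \<Rightarrow> expect \<Rightarrow> expect \<Rightarrow> expect" where
  "pmix p g h \<sigma> = ennreal (p \<sigma>) * g \<sigma> + ennreal (1 - p \<sigma>) * h \<sigma>"

definition lepred :: "expect \<Rightarrow> expect \<Rightarrow> pred" where
  "lepred f g \<sigma> = (f \<sigma> \<le> g \<sigma>)"

primrec dwp :: "pgcl \<Rightarrow> expect \<Rightarrow> expect" where
  "dwp Skip f = f"
| "dwp (Assign x E) f = subst f x E"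
| "dwp (Seq C1 C2) f = dwp C1 (dwp C2 f)"
| "dwp (GIf \<phi>1 C1 \<phi>2 C2) f = (\<lambda>\<sigma>. min (guardto \<phi>1 (dwp C1 f) \<sigma>) (guardto \<phi>2 (dwp C2 f) \<sigma>))"
| "dwp (Prob C1 p C2) f = pmix p (dwp C1 f) (dwp C2 f)"
| "dwp (While \<phi> C I) f =
     lfp (\<lambda>g \<sigma>. iv (\<lambda>s. \<not> \<phi> s) \<sigma> * f \<sigma> + iv \<phi> \<sigma> * dwp C g \<sigma>)"

primrec dwps :: "pgcl \<Rightarrow> expect \<Rightarrow> expect" where
  "dwps Skip f = f"
| "dwps (Assign x E) f = subst f x E"
| "dwps (Seq C1 C2) f = dwps C1 (dwps C2 f)"
| "dwps (GIf \<phi>1 C1 \<phi>2 C2) f = (\<lambda>\<sigma>. min (guardto \<phi>1 (dwps C1 f) \<sigma>) (guardto \<phi>2 (dwps C2 f) \<sigma>))"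
| "dwps (Prob C1 p C2) f = pmix p (dwps C1 f) (dwps C2 f)"
| "dwps (While \<phi> C I) f = I"

inductive impl :: "pgcl \<Rightarrow> pgcl \<Rightarrow> bool" where
  impl_refl: "impl C C"
| impl_trans: "impl C1 C2 \<Longrightarrow> impl C2 C3 \<Longrightarrow> impl C1 C3"
| impl_seq: "impl C1' C1 \<Longrightarrow> impl C2' C2 \<Longrightarrow> impl (Seq C1' C2') (Seq C1 C2)"
| impl_prob: "impl C1' C1 \<Longrightarrow> impl C2' C2 \<Longrightarrow> impl (Prob C1' p C2') (Prob C1 p C2)"
| impl_if: "impl C1' C1 \<Longrightarrow> impl C2' C2 \<Longrightarrow>
     (\<forall>\<sigma>. \<phi>1' \<sigma> \<longrightarrow> \<phi>1 \<sigma>) \<Longrightarrow> (\<forall>\<sigma>. \<phi>2' \<sigma> \<longrightarrow> \<phi>2 \<sigma>) \<Longrightarrow>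
     (\<forall>\<sigma>. \<phi>1' \<sigma> \<or> \<phi>2' \<sigma>) \<Longrightarrow>
     impl (GIf \<phi>1' C1' \<phi>2' C2') (GIf \<phi>1 C1 \<phi>2 C2)"
| impl_while: "impl C' C \<Longrightarrow> impl (While \<phi> C' I) (While \<phi> C I)"

type_synonym provider = "pgcl \<Rightarrow> expect \<Rightarrow> bool"

primrec vc :: "provider \<Rightarrow> pgcl \<Rightarrow> expect \<Rightarrow> bool" where
  "vc P Skip f = True"
| "vc P (Assign x E) f = True"
| "vc P (Seq C1 C2) f = (vc P C1 (dwps C2 f) \<and> vc P C2 f)"
| "vc P (GIf \<phi>1 C1 \<phi>2 C2) f = (vc P C1 f \<and> vc P C2 f)"
| "vc P (Prob C1 p C2) f = (vc P C1 f \<and> vc P C2 f)"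
| "vc P (While \<phi> C I) f = (P (While \<phi> C I) f \<and> vc P C I)"

definition yields_upper_bounds :: "provider \<Rightarrow> bool" where
  "yields_upper_bounds P = (\<forall>C f. wf C \<longrightarrow> vc P C f \<longrightarrow> dwp C f \<le> dwps C f)"

primrec trans_dwp :: "pgcl \<Rightarrow> expect \<Rightarrow> pgcl" where
  "trans_dwp Skip f = Skip"
| "trans_dwp (Assign x E) f = Assign x E"
| "trans_dwp (Seq C1 C2) f = Seq (trans_dwp C1 (dwps C2 f)) (trans_dwp C2 f)"
| "trans_dwp (GIf \<phi>1 C1 \<phi>2 C2) f =
     GIf (\<lambda>\<sigma>. \<phi>1 \<sigma> \<and> (\<phi>2 \<sigma> \<longrightarrow> lepred (dwps C1 f) (dwps C2 f) \<sigma>)) (trans_dwp C1 f)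
         (\<lambda>\<sigma>. \<phi>2 \<sigma> \<and> (\<phi>1 \<sigma> \<longrightarrow> lepred (dwps C2 f) (dwps C1 f) \<sigma>)) (trans_dwp C2 f)"
| "trans_dwp (Prob C1 p C2) f = Prob (trans_dwp C1 f) p (trans_dwp C2 f)"
| "trans_dwp (While \<phi> C I) f = While \<phi> (trans_dwp C I) I"

definition trans_preserves :: "provider \<Rightarrow> bool" where
  "trans_preserves P = (\<forall>C C' f. wf C \<longrightarrow> wf C' \<longrightarrow> vc P C f \<longrightarrow>
       impl C' (trans_dwp C f) \<longrightarrow> vc P C' f)"

text \<open>The provider is only ever consulted on loops; on other programs it is irrelevant.\<close>
fun superinv :: provider where
  "superinv (While \<phi> C I) f =
     ((\<lambda>\<sigma>. iv \<phi> \<sigma> * dwps C I \<sigma> + iv (\<lambda>s. \<not> \<phi> s) \<sigma> * f \<sigma>) \<le> I)"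
| "superinv _ f = True"

end

theory Submission
  imports Defs
begin

text \<open>Soundness of \<open>superinv\<close> is Park induction: together with the induction hypothesis
  \<open>dwp C I \<le> dwps C I\<close> for the loop body, the superinvariant condition makes \<open>I\<close> a
  prefixed point of the loop functional, hence an upper bound of its least fixed point.
  Preservation rests on the observation that every implementation \<open>C'\<close> of
  \<open>trans_dwp C f\<close> satisfies \<open>dwps C' f = dwps C f\<close>: the strengthened guards only keep
  a branch where it attains the demonic minimum, and the guards of \<open>C'\<close> still cover
  every state. Since the verification conditions mention the program only through
  \<open>dwps\<close> of its parts, they carry over from \<open>C\<close> to \<open>C'\<close>.\<close>

lemma guardto_mono: "g \<le> h \<Longrightarrow> guardto \<phi> g \<le> guardto \<phi> h"
  by (auto simp: guardto_def le_fun_def)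

lemma pmix_mono: "g \<le> g' \<Longrightarrow> h \<le> h' \<Longrightarrow> pmix p g h \<le> pmix p g' h'"
  by (auto simp: pmix_def le_fun_def intro!: add_mono mult_left_mono)

lemma min_guardto_mono:
  "g1 \<le> h1 \<Longrightarrow> g2 \<le> h2 \<Longrightarrow>
   (\<lambda>\<sigma>. min (guardto \<phi>1 g1 \<sigma>) (guardto \<phi>2 g2 \<sigma>))
     \<le> (\<lambda>\<sigma>. min (guardto \<phi>1 h1 \<sigma>) (guardto \<phi>2 h2 \<sigma>))"
  by (rule le_funI, rule min.mono; rule le_funD[OF guardto_mono])

lemma min_guardto_strengthen_guards:
  assumes "\<psi>1 \<sigma> \<or> \<psi>2 \<sigma>"
    and "\<psi>1 \<sigma> \<Longrightarrow> \<phi>1 \<sigma> \<and> (\<phi>2 \<sigma> \<longrightarrow> g1 \<sigma> \<le> g2 \<sigma>)"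
    and "\<psi>2 \<sigma> \<Longrightarrow> \<phi>2 \<sigma> \<and> (\<phi>1 \<sigma> \<longrightarrow> g2 \<sigma> \<le> g1 \<sigma>)"
  shows "min (guardto \<psi>1 g1 \<sigma>) (guardto \<psi>2 g2 \<sigma>) = min (guardto \<phi>1 g1 \<sigma>) (guardto \<phi>2 g2 \<sigma>)"
  using assms by (auto simp: guardto_def min_def top_unique)

lemma dwp_mono: "f \<le> g \<Longrightarrow> dwp C f \<le> dwp C g"
proof (induction C arbitrary: f g)
  case (Assign x E)
  then show ?case by (simp add: le_fun_def subst_def)
next
  case (GIf \<phi>1 C1 \<phi>2 C2)
  then show ?case by (simp add: min_guardto_mono)
next
  case (Prob C1 p C2)
  then show ?case by (simp add: pmix_mono)
next
  case (While \<phi> C I)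
  then show ?case
    by (simp only: dwp.simps, intro lfp_mono)
       (auto simp: le_fun_def intro!: add_mono mult_left_mono)
qed simp_all

lemma dwp_le_dwps_if_vc_superinv: "vc superinv C f \<Longrightarrow> dwp C f \<le> dwps C f"
proof (induction C arbitrary: f)
  case (Seq C1 C2)
  then have "dwp C1 (dwp C2 f) \<le> dwp C1 (dwps C2 f)"
    by (simp add: dwp_mono)
  also have "\<dots> \<le> dwps C1 (dwps C2 f)"
    using Seq by simp
  finally show ?case by simp
next
  case (GIf \<phi>1 C1 \<phi>2 C2)
  then show ?case by (simp add: min_guardto_mono)
next
  case (Prob C1 p C2)
  then show ?case by (simp add: pmix_mono)
next
  case (While \<phi> C I)
  then have superinv: "(\<lambda>\<sigma>. iv \<phi> \<sigma> * dwps C I \<sigma> + iv (\<lambda>s. \<not> \<phi> s) \<sigma> * f \<sigma>) \<le> I"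
    and body: "dwp C I \<le> dwps C I"
    by simp_all
  show ?case
  proof (simp only: dwp.simps dwps.simps, intro lfp_lowerbound le_funI)
    fix \<sigma>
    have "iv (\<lambda>s. \<not> \<phi> s) \<sigma> * f \<sigma> + iv \<phi> \<sigma> * dwp C I \<sigma>
        \<le> iv \<phi> \<sigma> * dwps C I \<sigma> + iv (\<lambda>s. \<not> \<phi> s) \<sigma> * f \<sigma>"
      using body by (subst add.commute) (auto simp: le_fun_def intro!: add_mono mult_left_mono)
    also have "\<dots> \<le> I \<sigma>"
      using superinv by (simp add: le_fun_def)
    finally show "iv (\<lambda>s. \<not> \<phi> s) \<sigma> * f \<sigma> + iv \<phi> \<sigma> * dwp C I \<sigma> \<le> I \<sigma>" .
  qed
qed simp_all

lemma impl_SkipD: "impl C' Skip \<Longrightarrow> C' = Skip"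
  by (induction C' Skip rule: impl.induct) auto

lemma impl_AssignD: "impl C' (Assign x E) \<Longrightarrow> C' = Assign x E"
  by (induction C' "Assign x E" rule: impl.induct) auto

lemma impl_SeqD:
  "impl C' (Seq C1 C2) \<Longrightarrow> \<exists>C1' C2'. C' = Seq C1' C2' \<and> impl C1' C1 \<and> impl C2' C2"
  by (induction C' "Seq C1 C2" arbitrary: C1 C2 rule: impl.induct)
     (blast intro: impl.intros)+

lemma impl_ProbD:
  "impl C' (Prob C1 p C2) \<Longrightarrow> \<exists>C1' C2'. C' = Prob C1' p C2' \<and> impl C1' C1 \<and> impl C2' C2"
  by (induction C' "Prob C1 p C2" arbitrary: C1 C2 rule: impl.induct)
     (blast intro: impl.intros)+

lemma impl_WhileD:
  "impl C' (While \<phi> C I) \<Longrightarrow> \<exists>C''. C' = While \<phi> C'' I \<and> impl C'' C"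
  by (induction C' "While \<phi> C I" arbitrary: C rule: impl.induct)
     (blast intro: impl.intros)+

lemma impl_GIfD:
  "impl C' (GIf \<phi>1 C1 \<phi>2 C2) \<Longrightarrow>
   \<exists>\<psi>1 C1' \<psi>2 C2'. C' = GIf \<psi>1 C1' \<psi>2 C2' \<and> impl C1' C1 \<and> impl C2' C2 \<and>
     (\<forall>\<sigma>. \<psi>1 \<sigma> \<longrightarrow> \<phi>1 \<sigma>) \<and> (\<forall>\<sigma>. \<psi>2 \<sigma> \<longrightarrow> \<phi>2 \<sigma>)"
proof (induction C' "GIf \<phi>1 C1 \<phi>2 C2" arbitrary: \<phi>1 C1 \<phi>2 C2 rule: impl.induct)
  case (impl_trans C' C'')
  then obtain \<chi>1 C1'' \<chi>2 C2'' where mid: "C'' = GIf \<chi>1 C1'' \<chi>2 C2''"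
    "impl C1'' C1" "impl C2'' C2" "\<forall>\<sigma>. \<chi>1 \<sigma> \<longrightarrow> \<phi>1 \<sigma>" "\<forall>\<sigma>. \<chi>2 \<sigma> \<longrightarrow> \<phi>2 \<sigma>"
    by blast
  with impl_trans obtain \<psi>1 C1' \<psi>2 C2' where "C' = GIf \<psi>1 C1' \<psi>2 C2'"
    "impl C1' C1''" "impl C2' C2''" "\<forall>\<sigma>. \<psi>1 \<sigma> \<longrightarrow> \<chi>1 \<sigma>" "\<forall>\<sigma>. \<psi>2 \<sigma> \<longrightarrow> \<chi>2 \<sigma>"
    by blast
  with mid show ?case
    by (blast intro: impl.impl_trans)
qed (auto intro: impl.impl_refl)

lemma dwps_impl_trans_dwp:
  "wf C' \<Longrightarrow> impl C' (trans_dwp C f) \<Longrightarrow> dwps C' f = dwps C f"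
proof (induction C arbitrary: C' f)
  case Skip
  then show ?case by (auto dest!: impl_SkipD)
next
  case (Assign x E)
  then show ?case by (auto dest!: impl_AssignD)
next
  case (Seq C1 C2)
  then show ?case by (auto dest!: impl_SeqD)
next
  case (Prob C1 p C2)
  then show ?case by (auto dest!: impl_ProbD)
next
  case (While \<phi> C I)
  then show ?case by (auto dest!: impl_WhileD)
next
  case (GIf \<phi>1 C1 \<phi>2 C2)
  obtain \<psi>1 C1' \<psi>2 C2' where C': "C' = GIf \<psi>1 C1' \<psi>2 C2'"
    and impl: "impl C1' (trans_dwp C1 f)" "impl C2' (trans_dwp C2 f)"
    and guard1: "\<forall>\<sigma>. \<psi>1 \<sigma> \<longrightarrow> \<phi>1 \<sigma> \<and> (\<phi>2 \<sigma> \<longrightarrow> lepred (dwps C1 f) (dwps C2 f) \<sigma>)"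
    and guard2: "\<forall>\<sigma>. \<psi>2 \<sigma> \<longrightarrow> \<phi>2 \<sigma> \<and> (\<phi>1 \<sigma> \<longrightarrow> lepred (dwps C2 f) (dwps C1 f) \<sigma>)"
    using impl_GIfD[OF GIf.prems(2)[simplified]] by blast
  have cover: "\<forall>\<sigma>. \<psi>1 \<sigma> \<or> \<psi>2 \<sigma>" and "wf C1'" "wf C2'"
    using GIf.prems(1) C' by simp_all
  then have "dwps C1' f = dwps C1 f" "dwps C2' f = dwps C2 f"
    using GIf.IH impl by blast+
  with cover guard1 guard2 show ?case
    unfolding C' by (auto simp: lepred_def intro!: min_guardto_strengthen_guards)
qed

lemma vc_superinv_impl_trans_dwp:
  "wf C' \<Longrightarrow> vc superinv C f \<Longrightarrow> impl C' (trans_dwp C f) \<Longrightarrow> vc superinv C' f"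
proof (induction C arbitrary: C' f)
  case Skip
  then show ?case by (auto dest!: impl_SkipD)
next
  case (Assign x E)
  then show ?case by (auto dest!: impl_AssignD)
next
  case (Seq C1 C2)
  then show ?case by (auto dest!: impl_SeqD simp: dwps_impl_trans_dwp)
next
  case (Prob C1 p C2)
  then show ?case by (auto dest!: impl_ProbD)
next
  case (GIf \<phi>1 C1 \<phi>2 C2)
  then show ?case by (fastforce dest!: impl_GIfD)
next
  case (While \<phi> C I)
  then show ?case by (auto dest!: impl_WhileD simp: dwps_impl_trans_dwp)
qed

theorem theorem6p8:
  shows "yields_upper_bounds superinv \<and> trans_preserves superinv"
  unfolding yields_upper_bounds_def trans_preserves_def
  using dwp_le_dwps_if_vc_superinv vc_superinv_impl_trans_dwp by blast

end
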